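(* Let $\Omega\subsetneq\mathbb{S}^m$ be a domain and $\rho\in C^1(\Omega)$. Then the associated map $\phi:\Omega\to\mathbb{H}^{m+1}$ is proper if and only if, for every $p\in\partial\Omega$, $$\lim_{x\to p}\big(\rho(x)^2+|\nabla\rho(x)|^2\big)=+\infty .$$
   Context: $\mathbb{S}^m\subset\mathbb{R}^{m+1}$ is the unit sphere with round metric $g_0$; $\nabla$ and $|\cdot|$ denote gradient and norm with respect to $g_0$ (so $\nabla\rho(x)\in T_x\mathbb{S}^m\subset\mathbb{R}^{m+1}$). Let $\mathbb{L}^{m+2}$ be $\mathbb{R}^{m+2}$ with the Lorentzian inner product $\langle\!\langle x,y\rangle\!\rangle=-x_0y_0+\sum_{i=1}^{m+1}x_iy_i$, and $\mathbb{H}^{m+1}=\{x\in\mathbb{L}^{m+2}:\langle\!\langle x,x\rangle\!\rangle=-1,\ x_0>0\}$ (hyperboloid model of hyperbolic space). For a domain $\Omega\subset\mathbb{S}^m$ and $\rho\in C^1(\Omega)$, the associated map $\phi=\phi^\rho:\Omega\to\mathbb{H}^{m+1}$ is $$\phi(x)=\frac{e^{\rho(x)}}{2}\Big(1+e^{-2\rho(x)}\big(1+|\nabla\rho(x)|^2\big)\Big)(1,x)+e^{-\rho(x)}\big(0,-x+\nabla\rho(x)\big).$$ A map is proper if preimages of compact subsets of $\mathbb{H}^{m+1}$ are compact in $\Omega$. *)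

theory Defs
  imports "HOL-Analysis.Analysis"
begin

text \<open>The ambient space R^(m+1) is an arbitrary Euclidean space 'a; the unit sphere
  S^m is sphere 0 1. The Lorentz space L^(m+2) is real \<times> 'a, first coordinate x_0.\<close>

definition lorentz :: "real \<times> 'a::euclidean_space \<Rightarrow> real \<times> 'a \<Rightarrow> real" where
  "lorentz x y = - fst x * fst y + snd x \<bullet> snd y"

definition hyperbolic_space :: "(real \<times> 'a::euclidean_space) set" where
  "hyperbolic_space = {x. lorentz x x = -1 \<and> fst x > 0}"

definition sphere_domain :: "'a::euclidean_space set \<Rightarrow> bool" where
  "sphere_domain \<Omega> \<longleftrightarrow> \<Omega> \<noteq> {} \<and> openin (top_of_set (sphere 0 1)) \<Omega> \<and> connected \<Omega>"

text \<open>Spherical gradient: the (unique) tangent vector v at x with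
  \<rho>(y) = \<rho>(x) + v \<bullet> (y - x) + o(|y - x|) for y in \<Omega>, i.e. the round-metric gradient.\<close>
definition has_sphere_gradient ::
  "('a::euclidean_space \<Rightarrow> real) \<Rightarrow> 'a set \<Rightarrow> 'a \<Rightarrow> 'a \<Rightarrow> bool" where
  "has_sphere_gradient \<rho> \<Omega> x v \<longleftrightarrow>
     v \<bullet> x = 0 \<and> (\<rho> has_derivative (\<lambda>h. v \<bullet> h)) (at x within \<Omega>)"

definition sphere_grad :: "('a::euclidean_space \<Rightarrow> real) \<Rightarrow> 'a set \<Rightarrow> 'a \<Rightarrow> 'a" where
  "sphere_grad \<rho> \<Omega> x = (THE v. has_sphere_gradient \<rho> \<Omega> x v)"

definition C1_on_sphere :: "'a::euclidean_space set \<Rightarrow> ('a \<Rightarrow> real) \<Rightarrow> bool" where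
  "C1_on_sphere \<Omega> \<rho> \<longleftrightarrow> (\<forall>x\<in>\<Omega>. \<exists>v. has_sphere_gradient \<rho> \<Omega> x v)
      \<and> continuous_on \<Omega> (sphere_grad \<rho> \<Omega>)"

definition assoc_map ::
  "'a::euclidean_space set \<Rightarrow> ('a \<Rightarrow> real) \<Rightarrow> 'a \<Rightarrow> real \<times> 'a" where
  "assoc_map \<Omega> \<rho> x =
     (let r = \<rho> x; g = sphere_grad \<rho> \<Omega> x;
          c = exp r / 2 * (1 + exp (-2 * r) * (1 + (norm g)\<^sup>2))
      in (c, c *\<^sub>R x) + exp (- r) *\<^sub>R (0, - x + g))"

definition proper_map_into :: "('a \<Rightarrow> 'b::topological_space) \<Rightarrow> 'a::topological_space set \<Rightarrow> 'b set \<Rightarrow> bool" where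
  "proper_map_into f A B \<longleftrightarrow> (\<forall>K. K \<subseteq> B \<and> compact K \<longrightarrow> compact {x\<in>A. f x \<in> K})"

end

theory Submission
  imports Defs
begin

text \<open>The time coordinate (height) of \<open>\<phi>(x)\<close> is \<open>(e\<^sup>\<rho> + e\<^sup>-\<^sup>\<rho>(1 + |\<nabla>\<rho>|\<^sup>2))/2\<close>,
  which is bounded exactly where \<open>\<rho>\<^sup>2 + |\<nabla>\<rho>|\<^sup>2\<close> is bounded. The compact subsets of the
  hyperboloid are the closed sets of bounded height, so \<open>\<phi>\<close> is proper iff the preimages of
  height sublevel sets are closed in the compact sphere, i.e. iff the height of \<open>\<phi>\<close> tends to
  infinity at every boundary point of \<open>\<Omega>\<close>.\<close>

lemma sphere_point_in_tangent_direction: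
  fixes x u :: "'a::real_inner"
  assumes x: "norm x = 1" and ux: "u \<bullet> x = 0" and u: "u \<noteq> 0" and r: "r > 0"
  obtains y where "norm y = 1" "y \<noteq> x" "norm (y - x) < r"
    "norm u * norm (y - x) \<le> 2 * (u \<bullet> (y - x))"
proof -
  define \<delta> where "\<delta> = min (1/2) (r\<^sup>2/4)"
  have \<delta>: "0 < \<delta>" "\<delta> \<le> 1/2" "2 * \<delta> < r\<^sup>2"
    using r by (auto simp: \<delta>_def min_def)
  define b where "b = sqrt (2 * \<delta> - \<delta>\<^sup>2)"
  have b2: "b\<^sup>2 = 2 * \<delta> - \<delta>\<^sup>2" and b0: "b \<ge> 0"
    using \<delta> unfolding b_def by (auto simp: power2_eq_square algebra_simps)
  define e where "e = u /\<^sub>R norm u"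
  have ee: "e \<bullet> e = 1" and ex: "e \<bullet> x = 0" and xx: "x \<bullet> x = 1"
    using u ux x by (auto simp: e_def dot_square_norm)
  define y where "y = (1 - \<delta>) *\<^sub>R x + b *\<^sub>R e"
  have yx: "y - x = b *\<^sub>R e - \<delta> *\<^sub>R x" by (simp add: y_def algebra_simps)
  have "y \<bullet> y = (1 - \<delta>)\<^sup>2 + b\<^sup>2"
    unfolding y_def using ee ex xx
    by (simp add: inner_add_left inner_add_right inner_commute power2_eq_square)
  then have "norm y = 1" using b2 by (simp add: norm_eq_1 power2_eq_square algebra_simps)
  have nyx2: "(norm (y - x))\<^sup>2 = 2 * \<delta>"
    unfolding yx power2_norm_eq_inner using ee ex xx b2
    by (simp add: inner_diff_left inner_diff_right inner_commute power2_eq_square algebra_simps)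
  then have "(norm (y - x))\<^sup>2 < r\<^sup>2" using \<delta>(3) by simp
  then have "norm (y - x) < r" by (rule power2_less_imp_less) (use r in simp)
  moreover have "y \<noteq> x"
  proof
    assume "y = x"
    with nyx2 \<delta>(1) show False by simp
  qed
  moreover have "norm u * norm (y - x) \<le> 2 * (u \<bullet> (y - x))"
  proof -
    have "\<delta> * \<delta> \<le> \<delta>" using mult_left_mono[of \<delta> 1 \<delta>] \<delta> by simp
    then have "(norm (y - x))\<^sup>2 \<le> (2 * b)\<^sup>2"
      using nyx2 b2 \<delta>(1) by (simp add: power2_eq_square)
    then have "norm (y - x) \<le> 2 * b" by (rule power2_le_imp_le) (use b0 in simp)
    then have "norm u * norm (y - x) \<le> norm u * (2 * b)" by (rule mult_left_mono) simp
    also have "\<dots> = 2 * (u \<bullet> (y - x))"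
      using u ux by (simp add: yx e_def inner_diff_right dot_square_norm power2_eq_square)
    finally show ?thesis .
  qed
  ultimately show ?thesis using that \<open>norm y = 1\<close> by blast
qed

text \<open>Two gradients differ by a tangent vector \<open>u\<close>; moving on the sphere in direction \<open>u\<close>
  makes \<open>u \<bullet> (y - x)\<close> comparable to \<open>|y - x|\<close>, which the vanishing derivative of
  \<open>\<rho> - \<rho>\<close> forbids.\<close>

lemma has_sphere_gradient_unique:
  assumes \<Omega>: "openin (top_of_set (sphere 0 1)) \<Omega>" and x: "x \<in> \<Omega>"
    and v: "has_sphere_gradient \<rho> \<Omega> x v" and w: "has_sphere_gradient \<rho> \<Omega> x w"
  shows "v = w"
proof (rule ccontr)
  define u where "u = v - w"
  assume "v \<noteq> w"
  then have u: "u \<noteq> 0" by (simp add: u_def)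
  have ux: "u \<bullet> x = 0" using v w by (simp add: u_def has_sphere_gradient_def inner_diff_left)
  have "((\<lambda>y. \<rho> y - \<rho> y) has_derivative (\<lambda>h. v \<bullet> h - w \<bullet> h)) (at x within \<Omega>)"
    by (rule has_derivative_diff) (use v w in \<open>simp_all add: has_sphere_gradient_def\<close>)
  then have "((\<lambda>y. 0) has_derivative (\<lambda>h. u \<bullet> h)) (at x within \<Omega>)"
    by (simp add: u_def inner_diff_left)
  moreover have "norm u / 4 > 0" using u by simp
  ultimately have "\<exists>d>0. \<forall>y\<in>\<Omega>. norm (y - x) < d \<longrightarrow>
      norm (0 - 0 - u \<bullet> (y - x)) \<le> norm u / 4 * norm (y - x)"
    unfolding has_derivative_within_alt by blast
  then obtain d where d: "d > 0"
    "\<And>y. y \<in> \<Omega> \<Longrightarrow> norm (y - x) < d \<Longrightarrow> \<bar>u \<bullet> (y - x)\<bar> \<le> norm u / 4 * norm (y - x)"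
    by auto
  obtain e where e: "e > 0" "ball x e \<inter> sphere 0 1 \<subseteq> \<Omega>"
    using \<Omega> x unfolding openin_contains_ball by blast
  have "norm x = 1" using openin_subset[OF \<Omega>] x by auto
  then obtain y where y: "norm y = 1" "y \<noteq> x" "norm (y - x) < min d e"
    and uy: "norm u * norm (y - x) \<le> 2 * (u \<bullet> (y - x))"
    using sphere_point_in_tangent_direction[OF _ ux u, of "min d e"] d(1) e(1) by auto
  have "y \<in> \<Omega>" using e(2) y(1,3) by (auto simp: dist_norm norm_minus_commute)
  then have "\<bar>u \<bullet> (y - x)\<bar> \<le> norm u / 4 * norm (y - x)" using d(2) y(3) by simp
  with uy have "norm u * norm (y - x) \<le> 0" by linarith
  then show False using u y(2) by (simp add: mult_le_0_iff)
qed

lemma sphere_grad_eqI: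
  assumes "openin (top_of_set (sphere 0 1)) \<Omega>" "x \<in> \<Omega>" "has_sphere_gradient \<rho> \<Omega> x v"
  shows "sphere_grad \<rho> \<Omega> x = v"
  unfolding sphere_grad_def using assms has_sphere_gradient_unique by blast

lemma C1_on_sphere_has_sphere_gradient:
  assumes "C1_on_sphere \<Omega> \<rho>" "openin (top_of_set (sphere 0 1)) \<Omega>" "x \<in> \<Omega>"
  shows "has_sphere_gradient \<rho> \<Omega> x (sphere_grad \<rho> \<Omega> x)"
proof -
  obtain v where "has_sphere_gradient \<rho> \<Omega> x v"
    using assms(1,3) unfolding C1_on_sphere_def by blast
  with sphere_grad_eqI[OF assms(2,3)] show ?thesis by simp
qed

lemma C1_on_sphere_imp_continuous_on:
  assumes "C1_on_sphere \<Omega> \<rho>"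
  shows "continuous_on \<Omega> \<rho>"
  unfolding continuous_on_eq_continuous_within
  using assms has_derivative_continuous
  unfolding C1_on_sphere_def has_sphere_gradient_def by blast

lemma continuous_on_assoc_map:
  assumes "C1_on_sphere \<Omega> \<rho>"
  shows "continuous_on \<Omega> (assoc_map \<Omega> \<rho>)"
  using C1_on_sphere_imp_continuous_on[OF assms] assms
  unfolding assoc_map_def Let_def C1_on_sphere_def by (intro continuous_intros) auto

lemma fst_assoc_map:
  "fst (assoc_map \<Omega> \<rho> x) =
     (exp (\<rho> x) + exp (- \<rho> x) * (1 + (norm (sphere_grad \<rho> \<Omega> x))\<^sup>2)) / 2"
proof -
  have "exp (\<rho> x) * exp (-2 * \<rho> x) = exp (- \<rho> x)" by (simp flip: exp_add)
  then show ?thesis by (simp add: assoc_map_def Let_def algebra_simps add_divide_distrib)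
qed

lemma assoc_map_in_hyperbolic_space:
  assumes "norm x = 1" "sphere_grad \<rho> \<Omega> x \<bullet> x = 0"
  shows "assoc_map \<Omega> \<rho> x \<in> hyperbolic_space"
proof -
  define g where "g = sphere_grad \<rho> \<Omega> x"
  define e where "e = exp (- \<rho> x)"
  define c where "c = fst (assoc_map \<Omega> \<rho> x)"
  have c: "c = (1 / e + e * (1 + g \<bullet> g)) / 2"
    by (simp add: c_def e_def g_def fst_assoc_map exp_minus dot_square_norm field_simps)
  have A: "assoc_map \<Omega> \<rho> x = (c, c *\<^sub>R x + e *\<^sub>R (g - x))"
    by (simp add: c_def e_def g_def assoc_map_def Let_def algebra_simps)
  have xx: "x \<bullet> x = 1" and gx: "g \<bullet> x = 0" and e: "e > 0"
    using assms by (simp_all add: g_def e_def dot_square_norm)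
  then have ce: "2 * c * e = 1 + e * e * (1 + g \<bullet> g)" unfolding c by (simp add: field_simps)
  have "(c *\<^sub>R x + e *\<^sub>R (g - x)) \<bullet> (c *\<^sub>R x + e *\<^sub>R (g - x))
      = c * c * (x \<bullet> x) + 2 * c * e * (g \<bullet> x) - 2 * c * e * (x \<bullet> x)
        + e * e * (g \<bullet> g) - 2 * e * e * (g \<bullet> x) + e * e * (x \<bullet> x)"
    by (simp add: inner_add_left inner_add_right inner_diff_left inner_diff_right
        inner_commute algebra_simps)
  also have "\<dots> = c * c - 1" using xx gx ce by (simp add: algebra_simps)
  finally have "lorentz (assoc_map \<Omega> \<rho> x) (assoc_map \<Omega> \<rho> x) = -1"
    unfolding A lorentz_def by simp
  moreover have "c > 0" unfolding c using e by (simp add: add_pos_nonneg)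
  ultimately show ?thesis by (simp add: hyperbolic_space_def A)
qed

lemma height_le_imp_sq_add_le:
  fixes r s M :: real
  assumes s: "s \<ge> 0" and M: "(exp r + exp (- r) * (1 + s)) / 2 \<le> M"
  shows "r\<^sup>2 + s \<le> 8 * M\<^sup>2"
proof -
  have sum: "exp r + exp (- r) * (1 + s) \<le> 2 * M" using M by simp
  have es: "exp (- r) \<le> exp (- r) * (1 + s)" using s by simp
  have er: "exp r \<le> 2 * M" using sum es exp_gt_zero[of "- r"] by linarith
  have ers: "exp (- r) * (1 + s) \<le> 2 * M" using sum exp_gt_zero[of r] by linarith
  have "exp (- r) \<le> 2 * M" using es ers by linarith
  with er have "exp \<bar>r\<bar> \<le> 2 * M" by (cases "r \<ge> 0") auto
  then have "\<bar>r\<bar> \<le> 2 * M" using exp_gt_self[of "\<bar>r\<bar>"] by linarith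
  then have "r\<^sup>2 \<le> (2 * M)\<^sup>2" by (metis abs_ge_zero power2_abs power_mono)
  moreover have "1 + s \<le> (2 * M)\<^sup>2"
  proof -
    have "1 + s = exp r * (exp (- r) * (1 + s))" by (simp add: exp_minus field_simps)
    also have "\<dots> \<le> exp r * (2 * M)" using ers by (intro mult_left_mono) auto
    also have "\<dots> \<le> (2 * M) * (2 * M)" using er \<open>\<bar>r\<bar> \<le> 2 * M\<close> by (intro mult_right_mono) auto
    finally show ?thesis by (simp add: power2_eq_square)
  qed
  ultimately show ?thesis by (simp add: power_mult_distrib)
qed

lemma sq_add_le_imp_height_le:
  fixes r s N :: real
  assumes s: "s \<ge> 0" and N: "r\<^sup>2 + s \<le> N"
  shows "(exp r + exp (- r) * (1 + s)) / 2 \<le> exp (N + 1) * (1 + N)"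
proof -
  have "2 * \<bar>r\<bar> \<le> r\<^sup>2 + 1"
    using zero_le_power2[of "\<bar>r\<bar> - 1"] by (simp add: power2_eq_square algebra_simps)
  then have "\<bar>r\<bar> \<le> N + 1" using s N by linarith
  then have e: "exp r \<le> exp (N + 1)" "exp (- r) \<le> exp (N + 1)" by auto
  have "s \<le> N" "0 \<le> N" using s N zero_le_power2[of r] by linarith+
  have "exp r + exp (- r) * (1 + s) \<le> exp (N + 1) + exp (N + 1) * (1 + N)"
    using e \<open>s \<le> N\<close> s by (intro add_mono mult_mono) auto
  also have "\<dots> \<le> 2 * (exp (N + 1) * (1 + N))" using \<open>0 \<le> N\<close> by simp
  finally show ?thesis by simp
qed

lemma compact_hyperbolic_sublevel:
  "compact {y \<in> (hyperbolic_space :: (real \<times> 'a::euclidean_space) set). fst y \<le> M}"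
proof -
  have lor: "(norm (snd y))\<^sup>2 = fst y * fst y - 1" if "lorentz y y = -1" for y
    using that by (simp add: lorentz_def dot_square_norm)
  have eq: "{y \<in> hyperbolic_space. fst y \<le> M} =
      {y. - fst y * fst y + snd y \<bullet> snd y = -1} \<inter> {y. 0 \<le> fst y} \<inter> {y. fst y \<le> M}"
    (is "?L = ?R")
  proof
    show "?L \<subseteq> ?R" by (auto simp: hyperbolic_space_def lorentz_def)
    show "?R \<subseteq> ?L"
    proof
      fix y assume y: "y \<in> ?R"
      then have "fst y \<noteq> 0"
        using lor[of y] zero_le_power2[of "norm (snd y)"] by (auto simp: lorentz_def)
      with y show "y \<in> ?L" by (simp add: hyperbolic_space_def lorentz_def)
    qed
  qed
  have "closed {y \<in> hyperbolic_space. fst y \<le> M}"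
    unfolding eq by (intro closed_Int closed_Collect_eq closed_Collect_le continuous_intros)
  moreover have "bounded {y \<in> hyperbolic_space. fst y \<le> M}"
    unfolding bounded_iff
  proof (intro exI ballI)
    fix y assume y: "y \<in> {y \<in> hyperbolic_space. fst y \<le> M}"
    then have "(norm (snd y))\<^sup>2 \<le> (fst y)\<^sup>2"
      using lor[of y] by (simp add: hyperbolic_space_def power2_eq_square)
    then have "norm (snd y) \<le> fst y" using y by (simp add: hyperbolic_space_def power2_le_iff_abs_le)
    then show "norm y \<le> 2 * M"
      using y norm_Pair_le[of "fst y" "snd y"] by (simp add: hyperbolic_space_def)
  qed
  ultimately show ?thesis by (simp add: compact_eq_bounded_closed)
qed

lemma filterlim_at_top_of_sublevel_bound:
  fixes f g :: "'a \<Rightarrow> real"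
  assumes "filterlim g at_top F" and "\<And>x M. f x \<le> M \<Longrightarrow> g x \<le> b M"
  shows "filterlim f at_top F"
  unfolding filterlim_at_top
proof
  fix Z
  have "eventually (\<lambda>x. b Z + 1 \<le> g x) F" using assms(1) by (simp add: filterlim_at_top)
  then show "eventually (\<lambda>x. Z \<le> f x) F"
  proof (rule eventually_mono)
    fix x assume "b Z + 1 \<le> g x"
    moreover have "g x \<le> b Z" if "f x \<le> Z" using assms(2) that .
    ultimately show "Z \<le> f x" by fastforce
  qed
qed

lemma proper_map_into_imp_filterlim_at_top:
  fixes f :: "'a::metric_space \<Rightarrow> 'b::metric_space" and h :: "'b \<Rightarrow> real"
  assumes proper: "proper_map_into f A B" and fA: "f ` A \<subseteq> B"
    and sublevel: "\<And>M. compact {y \<in> B. h y \<le> M}" and p: "p \<notin> A"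
  shows "filterlim (\<lambda>x. h (f x)) at_top (at p within A)"
  unfolding filterlim_at_top
proof
  fix M
  define C where "C = {x \<in> A. f x \<in> {y \<in> B. h y \<le> M}}"
  have "{y \<in> B. h y \<le> M} \<subseteq> B" by blast
  then have "compact C" using proper sublevel unfolding proper_map_into_def C_def by blast
  then have "open (- C)" by (simp add: compact_imp_closed open_Compl)
  moreover have "p \<in> - C" using p by (simp add: C_def)
  ultimately have "eventually (\<lambda>x. x \<in> - C) (nhds p)" by (rule eventually_nhds_in_open)
  moreover have "f x \<in> B" if "x \<in> A" for x using fA that by blast
  ultimately show "eventually (\<lambda>x. M \<le> h (f x)) (at p within A)"
    unfolding eventually_at_filter by (auto simp: C_def elim: eventually_mono)
qed

lemma proper_map_intoI_filterlim_at_top: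
  fixes f :: "'a::metric_space \<Rightarrow> 'b::metric_space" and h :: "'b \<Rightarrow> real"
  assumes f: "continuous_on A f" and A: "compact S" "A \<subseteq> S" and h: "continuous_on B h"
    and escape: "\<And>p. p \<in> closure A - A \<Longrightarrow> filterlim (\<lambda>x. h (f x)) at_top (at p within A)"
  shows "proper_map_into f A B"
  unfolding proper_map_into_def
proof (intro allI impI)
  fix K assume K: "K \<subseteq> B \<and> compact K"
  define P where "P = {x \<in> A. f x \<in> K}"
  have "compact (h ` K)"
    using K continuous_on_subset[OF h] by (intro compact_continuous_image) auto
  then have "bdd_above (h ` K)" by (intro bounded_imp_bdd_above compact_imp_bounded)
  then obtain c where c: "\<And>y. y \<in> K \<Longrightarrow> h y \<le> c" by (auto simp: bdd_above_def)
  have "closedin (top_of_set A) (A \<inter> f -` K)"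
    using f K compact_imp_closed by (intro continuous_closedin_preimage) auto
  then obtain C where C: "closed C" "P = A \<inter> C"
    unfolding closedin_closed P_def by blast
  have "closure P \<subseteq> P"
  proof
    fix p assume p: "p \<in> closure P"
    have "p \<in> C" using p C closure_minimal[of P C] by auto
    show "p \<in> P"
    proof (rule ccontr)
      assume "p \<notin> P"
      moreover have "p \<in> closure A" using p closure_mono[of P A] by (auto simp: P_def)
      ultimately have pA: "p \<in> closure A - A" using \<open>p \<in> C\<close> C(2) by blast
      have "eventually (\<lambda>x. c + 1 \<le> h (f x)) (at p within A)"
        using escape[OF pA] by (simp add: filterlim_at_top)
      then have "eventually (\<lambda>x. c + 1 \<le> h (f x)) (at p within P)"
        by (rule filter_leD[OF at_le, rotated]) (simp add: P_def)
      moreover have "eventually (\<lambda>x. x \<in> P) (at p within P)"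
        by (simp add: eventually_at_filter)
      ultimately have "eventually (\<lambda>x. False) (at p within P)"
        by eventually_elim (use c in \<open>force simp: P_def\<close>)
      then have "p \<notin> closure (P - {p})" unfolding eventually_False at_within_eq_bot_iff .
      moreover have "P - {p} = P" using \<open>p \<notin> P\<close> by blast
      ultimately show False using p by simp
    qed
  qed
  then have "compact (S \<inter> P)"
    using A by (intro compact_Int_closed) (simp_all add: closure_subset_eq)
  moreover have "S \<inter> P = P" using A by (auto simp: P_def)
  ultimately show "compact {x \<in> A. f x \<in> K}" by (simp add: P_def)
qed

lemma filterlim_fst_assoc_map_iff:
  "filterlim (\<lambda>x. fst (assoc_map \<Omega> \<rho> x)) at_top F \<longleftrightarrow>
   filterlim (\<lambda>x. (\<rho> x)\<^sup>2 + (norm (sphere_grad \<rho> \<Omega> x))\<^sup>2) at_top F"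
proof
  assume "filterlim (\<lambda>x. fst (assoc_map \<Omega> \<rho> x)) at_top F"
  then show "filterlim (\<lambda>x. (\<rho> x)\<^sup>2 + (norm (sphere_grad \<rho> \<Omega> x))\<^sup>2) at_top F"
    by (rule filterlim_at_top_of_sublevel_bound[where b = "\<lambda>N. exp (N + 1) * (1 + N)"])
      (unfold fst_assoc_map, rule sq_add_le_imp_height_le; simp)
next
  assume "filterlim (\<lambda>x. (\<rho> x)\<^sup>2 + (norm (sphere_grad \<rho> \<Omega> x))\<^sup>2) at_top F"
  then show "filterlim (\<lambda>x. fst (assoc_map \<Omega> \<rho> x)) at_top F"
    by (rule filterlim_at_top_of_sublevel_bound[where b = "\<lambda>M. 8 * M\<^sup>2"])
      (unfold fst_assoc_map, rule height_le_imp_sq_add_le; simp)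
qed

theorem mainTheorem1:
  fixes \<Omega> :: "'a::euclidean_space set" and \<rho> :: "'a \<Rightarrow> real"
  assumes "sphere_domain \<Omega>" and "\<Omega> \<noteq> sphere 0 1"
    and "C1_on_sphere \<Omega> \<rho>"
  shows "proper_map_into (assoc_map \<Omega> \<rho>) \<Omega> hyperbolic_space \<longleftrightarrow>
    (\<forall>p \<in> closure \<Omega> - \<Omega>.
       filterlim (\<lambda>x. (\<rho> x)\<^sup>2 + (norm (sphere_grad \<rho> \<Omega> x))\<^sup>2) at_top (at p within \<Omega>))"
proof -
  have \<Omega>: "openin (top_of_set (sphere 0 1)) \<Omega>" using assms(1) by (simp add: sphere_domain_def)
  then have \<Omega>_sphere: "\<Omega> \<subseteq> sphere 0 1" using openin_subset by fastforce
  have "assoc_map \<Omega> \<rho> x \<in> hyperbolic_space" if "x \<in> \<Omega>" for x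
    using that \<Omega>_sphere C1_on_sphere_has_sphere_gradient[OF assms(3) \<Omega> that]
    by (intro assoc_map_in_hyperbolic_space) (auto simp: has_sphere_gradient_def)
  then have "assoc_map \<Omega> \<rho> ` \<Omega> \<subseteq> hyperbolic_space" by blast
  note escape = proper_map_into_imp_filterlim_at_top[OF _ this compact_hyperbolic_sublevel]
  note proper = proper_map_intoI_filterlim_at_top[OF continuous_on_assoc_map[OF assms(3)]
      compact_sphere \<Omega>_sphere continuous_on_fst[OF continuous_on_id]]
  show ?thesis
    using escape proper by (auto simp: filterlim_fst_assoc_map_iff)
qed

end
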